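(* Let $n\ge2$, $m\ge2$ be integers, let $\mathcal{V}=\mathcal{V}_1\otimes\dots\otimes\mathcal{V}_m$ be a tensor product of vector spaces over a field $\mathbb{F}$, let $\{x_a : a\in[n]\}$ be a multiset of product tensors with $x_a=x_{a,1}\otimes\dots\otimes x_{a,m}$, and let $d_j=\dim\operatorname{span}\{x_{a,j}:a\in[n]\}$ for $j\in[m]$. Let $r \in \{0,1,\dots, n\}$. If $n+r \leq \sum_{j=1}^m (d_j-1)+1$, then for any non-negative integer $\tilde{r} \leq r$ and multiset of product tensors $\{y_a : a \in [\tilde{r}]\}$ with $\sum_{a \in [n]} x_a = \sum_{a \in [\tilde{r}]} y_a$, there exist subsets $Q\subseteq[n]$, $R\subseteq[\tilde r]$ with $\max\{1,|R|\}\le |Q|\le n-1$ and $\sum_{a\in Q}x_a=\sum_{a\in R}y_a$. Moreover, if $n+r \leq \sum_{j=1}^m (d_j-1)+1$, $\tilde{r}=\operatorname{rank}[\sum_{a \in [n]} x_a]$, and $1\leq \tilde{r} \leq \min\{r,n-1\}$, then there exists a subset $S \subseteq [n]$ with $\tilde{r} \leq |S| \leq n-1$ for which $\operatorname{rank}[\sum_{a \in S} x_a] < \tilde{r}$.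
   Context: $[n]=\{1,\dots,n\}$, $[0]=\emptyset$ (an empty sum is $0$). A product tensor is a non-zero tensor $z_1\otimes\dots\otimes z_m$, $z_j\in\mathcal{V}_j$. $\operatorname{rank}$ denotes tensor rank: the minimum number of product tensors summing to the tensor. *)

theory Defs
  imports Complex_Main "HOL-Library.Function_Algebras"
begin

text \<open>A vector of the factor space is a function 'b => 'a (coordinates
w.r.t. a basis indexed by 'b; every vector space over 'a embeds in such a space).
A factor family z :: nat => 'b => 'a gives z j in V_j for j in {1..m}.
The tensor z_1 (x) ... (x) z_m is represented by its coordinate function on index
tuples i :: nat => 'b, namely i |-> prod_{j=1..m} z j (i j).\<close>

definition fscale :: "'a::field \<Rightarrow> ('b \<Rightarrow> 'a) \<Rightarrow> ('b \<Rightarrow> 'a)" where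
  "fscale c f = (\<lambda>x. c * f x)"

definition tprod :: "nat \<Rightarrow> (nat \<Rightarrow> 'b \<Rightarrow> 'a::field) \<Rightarrow> ((nat \<Rightarrow> 'b) \<Rightarrow> 'a)" where
  "tprod m z = (\<lambda>i. \<Prod>j\<in>{1..m}. z j (i j))"

definition is_ptensor :: "nat \<Rightarrow> (nat \<Rightarrow> 'b \<Rightarrow> 'a::field) \<Rightarrow> bool" where
  "is_ptensor m z \<longleftrightarrow> tprod m z \<noteq> 0"

definition trank :: "nat \<Rightarrow> ((nat \<Rightarrow> 'b) \<Rightarrow> 'a::field) \<Rightarrow> nat" where
  "trank m T = (LEAST k. \<exists>y :: nat \<Rightarrow> nat \<Rightarrow> 'b \<Rightarrow> 'a.
      (\<forall>a\<in>{1..k}. is_ptensor m (y a)) \<and> T = (\<Sum>a\<in>{1..k}. tprod m (y a)))"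

definition vdim :: "('b \<Rightarrow> 'a::field) set \<Rightarrow> nat" where
  "vdim S = vector_space.dim fscale S"

end

(*
  Call a finite family of vectors connected if it cannot be split into two nonempty
  subfamilies whose spans meet only in 0. The core of the proof is a dimension bound for a
  connected family of nonzero product tensors z_a = z_a1 (x) ... (x) z_am:
    sum_j (dim span {z_aj} - 1) + 1 <= dim span {z_a}.
  It is proved one factor at a time. Writing z_a = u_a (x) w_a, choose a basis {z_b : b in B}
  of the span; a largest P <= B with dim U_P + dim W_P <= |P| + 1 must be all of B, because
  connectivity produces some z_a whose expansion straddles P and B - P, and the relation
  z_a - sum_b c_b z_b, contracted with functionals dual to the u_b, shows that enlarging P
  by the support of that expansion preserves the bound.

  A vanishing sum of product tensors with no vanishing proper subsum is connected and spans a
  space of dimension less than its number of terms, so it has at least sum_j (d_j - 1) + 2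
  terms. Given sum_{a in [n]} x_a = sum_{a in [r~]} y_a, take a matching subsum
  sum_Q x = sum_R y with Q nonempty, |R| <= |Q| and |Q| + |R| minimal. If Q were all of [n],
  the x_a together with the -y_b for b in R would form such a minimal vanishing sum with at most
  n + r terms, contradicting n + r <= sum_j (d_j - 1) + 1. For the rank statement apply this to
  a decomposition of length r~ = rank, pass to complements so that |R| < |Q|, and pad Q to a
  set S of size at least r~ whose sum has rank at most |R| + |S - Q| < r~.
*)
theory Submission
  imports Defs
begin

section \<open>Coordinate vector spaces\<close>

interpretation fs: vector_space "fscale :: 'a::field \<Rightarrow> ('b \<Rightarrow> 'a) \<Rightarrow> 'b \<Rightarrow> 'a"
  by unfold_locales (auto simp: fscale_def fun_eq_iff algebra_simps)

interpretation fs_pair: vector_space_pair "fscale :: 'a::field \<Rightarrow> ('b \<Rightarrow> 'a) \<Rightarrow> 'b \<Rightarrow> 'a"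
    "fscale :: 'a \<Rightarrow> ('c \<Rightarrow> 'a) \<Rightarrow> 'c \<Rightarrow> 'a"
  by unfold_locales

interpretation fs_functional: vector_space_pair "fscale :: 'a::field \<Rightarrow> ('b \<Rightarrow> 'a) \<Rightarrow> 'b \<Rightarrow> 'a"
    "(*) :: 'a \<Rightarrow> 'a \<Rightarrow> 'a"
  by unfold_locales (auto simp: algebra_simps)

lemma fscale_apply: "fscale c f x = c * f x"
  by (simp add: fscale_def)

lemma in_span_of_fscale_in_span:
  assumes "fscale c v \<in> fs.span S" "c \<noteq> 0"
  shows "v \<in> fs.span S"
  using fs.span_scale[OF assms(1), of "inverse c"] assms(2) by (simp add: fs.scale_scale)

lemma linear_image_in_span:
  fixes h :: "('b \<Rightarrow> 'a::field) \<Rightarrow> 'c \<Rightarrow> 'a"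
  assumes "Vector_Spaces.linear fscale fscale h" "v \<in> fs.span X" "h ` X \<subseteq> fs.span W"
  shows "h v \<in> fs.span W"
proof -
  have "h v \<in> fs.span (h ` X)"
    using fs_pair.linear_span_image[OF assms(1)] assms(2) by blast
  also have "\<dots> \<subseteq> fs.span W"
    using assms(3) by (simp add: fs.span_minimal)
  finally show ?thesis .
qed

lemma dim_le_dim_of_subset_span:
  fixes V W :: "('b \<Rightarrow> 'a::field) set"
  assumes "V \<subseteq> fs.span W" "finite W"
  shows "fs.dim V \<le> fs.dim W"
proof -
  obtain B where B: "B \<subseteq> W" "fs.independent B" "W \<subseteq> fs.span B" "card B = fs.dim W"
    by (rule fs.basis_exists)
  have "V \<subseteq> fs.span B"
    using assms(1) B(3) fs.span_minimal[of W "fs.span B"] by auto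
  moreover have "finite B"
    using B(1) assms(2) finite_subset by blast
  ultimately show ?thesis
    using B(4) fs.dim_le_card by metis
qed

lemma dim_pos_of_nonzero:
  fixes S X :: "('b \<Rightarrow> 'a::field) set"
  assumes "finite X" "S \<subseteq> fs.span X" "v \<in> S" "v \<noteq> 0"
  shows "1 \<le> fs.dim S"
proof -
  obtain C where C: "C \<subseteq> S" "fs.independent C" "S \<subseteq> fs.span C" "card C = fs.dim S"
    by (rule fs.basis_exists)
  have "finite C"
    using fs.independent_span_bound[OF assms(1) C(2)] C(1) assms(2) by blast
  moreover have "C \<noteq> {}"
    using C(3) assms(3,4) by auto
  ultimately have "0 < card C"
    by (simp add: card_gt_0_iff)
  then show ?thesis
    using C(4) by simp
qed

lemma dim_Un_add_dim_span_Int_le: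
  fixes X Y :: "('b \<Rightarrow> 'a::field) set"
  assumes "finite X" "finite Y"
  shows "fs.dim (X \<union> Y) + fs.dim (fs.span X \<inter> fs.span Y) \<le> fs.dim X + fs.dim Y"
proof -
  let ?K = "fs.span X \<inter> fs.span Y"
  obtain C where C: "C \<subseteq> ?K" "fs.independent C" "card C = fs.dim ?K"
    by (rule fs.basis_exists)
  obtain D where D: "C \<subseteq> D" "D \<subseteq> fs.span X" "fs.independent D" "fs.span X \<subseteq> fs.span D"
    using fs.maximal_independent_subset_extend[of C "fs.span X"] C(1,2) by blast
  obtain E where E: "C \<subseteq> E" "E \<subseteq> fs.span Y" "fs.independent E" "fs.span Y \<subseteq> fs.span E"
    using fs.maximal_independent_subset_extend[of C "fs.span Y"] C(1,2) by blast
  have fin: "finite D" "finite E"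
    using fs.independent_span_bound assms D(2,3) E(2,3) by blast+
  have "X \<union> Y \<subseteq> fs.span (D \<union> E)"
    using D(4) E(4) fs.span_superset[of X] fs.span_superset[of Y]
      fs.span_mono[of D "D \<union> E"] fs.span_mono[of E "D \<union> E"] by blast
  then have "fs.dim (X \<union> Y) \<le> card (D \<union> E)"
    using fin by (intro fs.dim_le_card) auto
  moreover have "card (D \<union> E) + card (D \<inter> E) = card D + card E"
    using card_Un_Int[OF fin] by simp
  moreover have "card C \<le> card (D \<inter> E)"
    using D(1) E(1) fin by (intro card_mono) auto
  moreover have "card D = fs.dim X" "card E = fs.dim Y"
    using fs.basis_card_eq_dim D(2-4) E(2-4) by (metis fs.dim_span)+
  ultimately show ?thesis
    using C(3) by linarith
qed

lemma obtain_independent_subfamily: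
  fixes z :: "'i \<Rightarrow> 'b \<Rightarrow> 'a::field"
  assumes "finite Y"
  obtains B where "B \<subseteq> Y" "inj_on z B" "fs.independent (z ` B)"
    "fs.span (z ` B) = fs.span (z ` Y)" "card B = fs.dim (z ` Y)"
proof -
  obtain B0 where B0: "B0 \<subseteq> z ` Y" "fs.independent B0" "z ` Y \<subseteq> fs.span B0"
    by (rule fs.maximal_independent_subset)
  obtain B where B: "B \<subseteq> Y" "inj_on z B" "B0 = z ` B"
    using subset_image_inj B0(1) by metis
  have span: "fs.span (z ` B) = fs.span (z ` Y)"
    using B0(3) B fs.span_mono[of "z ` B" "z ` Y"] fs.span_minimal[of "z ` Y" "fs.span B0"]
    by auto
  have "card B = fs.dim (z ` B)"
    using B0(2) B(2,3) by (simp add: fs.dim_eq_card_independent card_image)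
  also have "\<dots> = fs.dim (z ` Y)"
    using span by (rule fs.span_eq_dim)
  finally show ?thesis
    using that B B0(2) span by blast
qed

lemma obtain_span_image_coeffs:
  fixes z :: "'i \<Rightarrow> 'b \<Rightarrow> 'a::field"
  assumes "finite B" "inj_on z B" "v \<in> fs.span (z ` B)"
  obtains \<gamma> where "v = (\<Sum>b\<in>B. fscale (\<gamma> b) (z b))"
proof -
  obtain c where "v = (\<Sum>x\<in>z ` B. fscale (c x) x)"
    using assms fs.span_finite[of "z ` B"] by auto
  also have "\<dots> = (\<Sum>b\<in>B. fscale (c (z b)) (z b))"
    using sum.reindex[OF assms(2)] by simp
  finally show ?thesis
    using that[of "\<lambda>b. c (z b)"] by blast
qed

lemma independent_image_coeffs_zero:
  fixes z :: "'i \<Rightarrow> 'b \<Rightarrow> 'a::field"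
  assumes "finite B" "inj_on z B" "fs.independent (z ` B)"
    and "(\<Sum>b\<in>B. fscale (\<gamma> b) (z b)) = 0" "b \<in> B"
  shows "\<gamma> b = 0"
proof -
  let ?c = "\<lambda>v. \<gamma> (inv_into B z v)"
  have "(\<Sum>v\<in>z ` B. fscale (?c v) v) = (\<Sum>b\<in>B. fscale (\<gamma> b) (z b))"
    using assms(2) by (simp add: sum.reindex)
  then have "\<forall>v\<in>z ` B. ?c v = 0"
    using fs.independentD[OF assms(3), of "z ` B" ?c] assms(1,4) by auto
  then show ?thesis
    using assms(2,5) by force
qed

lemma independent_image_span_disjoint:
  fixes z :: "'i \<Rightarrow> 'b \<Rightarrow> 'a::field"
  assumes B: "finite B" "inj_on z B" "fs.independent (z ` B)" and "P \<subseteq> B"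
    and "v \<in> fs.span (z ` P)" "v \<in> fs.span (z ` (B - P))"
  shows "v = 0"
proof -
  obtain \<alpha> where \<alpha>: "v = (\<Sum>b\<in>P. fscale (\<alpha> b) (z b))"
    using obtain_span_image_coeffs[of P z v] assms finite_subset inj_on_subset by metis
  obtain \<beta> where \<beta>: "v = (\<Sum>b\<in>B - P. fscale (\<beta> b) (z b))"
    using obtain_span_image_coeffs[of "B - P" z v] assms inj_on_subset by blast
  define \<gamma> where "\<gamma> b = (if b \<in> P then \<alpha> b else - \<beta> b)" for b
  have "(\<Sum>b\<in>B. fscale (\<gamma> b) (z b))
      = (\<Sum>b\<in>P. fscale (\<gamma> b) (z b)) + (\<Sum>b\<in>B - P. fscale (\<gamma> b) (z b))"
    using sum.subset_diff[OF \<open>P \<subseteq> B\<close> \<open>finite B\<close>] by (simp add: add.commute)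
  also have "(\<Sum>b\<in>P. fscale (\<gamma> b) (z b)) = v"
    unfolding \<alpha> \<gamma>_def by (intro sum.cong) auto
  also have "(\<Sum>b\<in>B - P. fscale (\<gamma> b) (z b)) = - v"
    unfolding \<beta> \<gamma>_def by (simp add: sum_negf[symmetric] fun_eq_iff)
  finally have "(\<Sum>b\<in>B. fscale (\<gamma> b) (z b)) = 0"
    by (simp only: add.right_inverse)
  then have "\<forall>b\<in>B. \<gamma> b = 0"
    using independent_image_coeffs_zero[OF B] by blast
  then have "\<forall>b\<in>P. \<alpha> b = 0"
    using \<open>P \<subseteq> B\<close> unfolding \<gamma>_def by (metis subsetD)
  then show ?thesis
    unfolding \<alpha> by (simp add: fscale_def fun_eq_iff)
qed

lemma obtain_dual_functional:
  fixes u :: "'i \<Rightarrow> 'b \<Rightarrow> 'a::field"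
  assumes "inj_on u B" "fs.independent (u ` B)" "b \<in> B"
  obtains f where "Vector_Spaces.linear fscale (*) f"
    "\<And>q. q \<in> B \<Longrightarrow> f (u q) = (if q = b then 1 else 0)"
proof
  let ?f = "fs_functional.construct (u ` B) (\<lambda>v. if v = u b then (1::'a) else 0)"
  show "Vector_Spaces.linear fscale (*) ?f"
    by (rule fs_functional.linear_construct[OF assms(2)])
  show "?f (u q) = (if q = b then 1 else 0)" if "q \<in> B" for q
    using fs_functional.construct_basis[OF assms(2)] that assms(1,3) by (auto dest: inj_onD)
qed

section \<open>Splitting off one tensor factor\<close>

text \<open>\<open>tensor_at j u w\<close> is \<open>u \<otimes> w\<close> with \<open>u\<close> in the \<open>j\<close>-th factor; it is a genuine tensor
  product when \<open>w\<close> ignores coordinate \<open>j\<close>. \<open>contract j f\<close> applies a linear functional \<open>f\<close>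
  to the \<open>j\<close>-th factor.\<close>

definition tensor_at :: "nat \<Rightarrow> ('b \<Rightarrow> 'a) \<Rightarrow> ((nat \<Rightarrow> 'b) \<Rightarrow> 'a) \<Rightarrow> (nat \<Rightarrow> 'b) \<Rightarrow> 'a::field"
  where "tensor_at j u w = (\<lambda>i. u (i j) * w i)"

definition ignores_coord :: "nat \<Rightarrow> ((nat \<Rightarrow> 'b) \<Rightarrow> 'a) \<Rightarrow> bool"
  where "ignores_coord j w \<longleftrightarrow> (\<forall>i c. w (i(j := c)) = w i)"

definition fiber :: "nat \<Rightarrow> (nat \<Rightarrow> 'b) \<Rightarrow> ((nat \<Rightarrow> 'b) \<Rightarrow> 'a) \<Rightarrow> 'b \<Rightarrow> 'a"
  where "fiber j i v = (\<lambda>c. v (i(j := c)))"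

definition contract :: "nat \<Rightarrow> (('b \<Rightarrow> 'a) \<Rightarrow> 'a) \<Rightarrow> ((nat \<Rightarrow> 'b) \<Rightarrow> 'a) \<Rightarrow> (nat \<Rightarrow> 'b) \<Rightarrow> 'a"
  where "contract j f v = (\<lambda>i. f (fiber j i v))"

lemma tensor_at_nonzero:
  assumes "tensor_at j u w \<noteq> 0"
  shows "u \<noteq> 0" "w \<noteq> 0"
  using assms by (auto simp: tensor_at_def fun_eq_iff)

lemma fiber_tensor_at: "ignores_coord j w \<Longrightarrow> fiber j i (tensor_at j u w) = fscale (w i) u"
  by (auto simp: fiber_def tensor_at_def ignores_coord_def fscale_def fun_eq_iff mult.commute)

lemma contract_tensor_at:
  "Vector_Spaces.linear fscale (*) f \<Longrightarrow> ignores_coord j w \<Longrightarrow>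
    contract j f (tensor_at j u w) = fscale (f u) w"
  by (simp add: contract_def fiber_tensor_at fun_eq_iff fs_functional.linear_scale fscale_apply)

lemma contract_eval: "contract j (\<lambda>u. u c) v i = v (i(j := c))"
  by (simp add: contract_def fiber_def)

lemma linear_eval: "Vector_Spaces.linear fscale (*) (\<lambda>u. u c)"
  by unfold_locales (simp_all add: fscale_apply)

lemma linear_fiber: "Vector_Spaces.linear fscale fscale (fiber j i)"
  by unfold_locales (simp_all add: fiber_def fscale_def fun_eq_iff)

lemma linear_contract:
  assumes "Vector_Spaces.linear fscale (*) f"
  shows "Vector_Spaces.linear fscale fscale (contract j f)"
proof unfold_locales
  fix x y c
  show "contract j f (x + y) = contract j f x + contract j f y"
    unfolding contract_def fs_pair.linear_add[OF linear_fiber] fs_functional.linear_add[OF assms] by auto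
  show "contract j f (fscale c x) = fscale c (contract j f x)"
    unfolding contract_def fs_pair.linear_scale[OF linear_fiber] fs_functional.linear_scale[OF assms]
    by (simp add: fscale_def)
qed

lemma fiber_in_span:
  assumes "v \<in> fs.span ((\<lambda>a. tensor_at j (u a) (w a)) ` S)" "\<forall>a\<in>S. ignores_coord j (w a)"
  shows "fiber j i v \<in> fs.span (u ` S)"
proof (rule linear_image_in_span[OF linear_fiber assms(1)])
  show "fiber j i ` (\<lambda>a. tensor_at j (u a) (w a)) ` S \<subseteq> fs.span (u ` S)"
    using assms(2) by (auto simp: fiber_tensor_at intro!: fs.span_scale[OF fs.span_base[OF imageI]])
qed

lemma contract_in_span:
  assumes "Vector_Spaces.linear fscale (*) f"
    and "v \<in> fs.span ((\<lambda>a. tensor_at j (u a) (w a)) ` S)" "\<forall>a\<in>S. ignores_coord j (w a)"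
  shows "contract j f v \<in> fs.span (w ` S)"
proof (rule linear_image_in_span[OF linear_contract[OF assms(1)] assms(2)])
  show "contract j f ` (\<lambda>a. tensor_at j (u a) (w a)) ` S \<subseteq> fs.span (w ` S)"
    using assms(1,3) by (auto simp: contract_tensor_at intro!: fs.span_scale[OF fs.span_base[OF imageI]])
qed

lemma tensor_at_factors_in_span:
  assumes "tensor_at j u w \<in> fs.span ((\<lambda>a. tensor_at j (U a) (W a)) ` B)"
    and "tensor_at j u w \<noteq> 0" "ignores_coord j w" "\<forall>a\<in>B. ignores_coord j (W a)"
  shows "u \<in> fs.span (U ` B)" "w \<in> fs.span (W ` B)"
proof -
  obtain i where "w i \<noteq> 0"
    using tensor_at_nonzero(2)[OF assms(2)] by (auto simp: fun_eq_iff)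
  moreover have "fscale (w i) u \<in> fs.span (U ` B)"
    using fiber_in_span[OF assms(1,4), of i] fiber_tensor_at[OF assms(3)] by simp
  ultimately show "u \<in> fs.span (U ` B)"
    by (rule in_span_of_fscale_in_span[rotated])
  obtain c where "u c \<noteq> 0"
    using tensor_at_nonzero(1)[OF assms(2)] by (auto simp: fun_eq_iff)
  moreover have "fscale (u c) w \<in> fs.span (W ` B)"
    using contract_in_span[OF linear_eval assms(1,4)] contract_tensor_at[OF linear_eval assms(3)]
    by metis
  ultimately show "w \<in> fs.span (W ` B)"
    by (rule in_span_of_fscale_in_span[rotated])
qed

text \<open>Contracting the relation with the functional dual to \<open>u b\<close> leaves \<open>c b\<close> times \<open>w b\<close>
  plus terms in \<open>w ` (Q - BQ)\<close>, and the contraction itself lies in both \<open>W\<^sub>Q\<close> and \<open>W\<^sub>P\<close>.\<close>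

lemma contracted_factor_in_span:
  fixes u :: "'i \<Rightarrow> 'b \<Rightarrow> 'a::field" and w :: "'i \<Rightarrow> (nat \<Rightarrow> 'b) \<Rightarrow> 'a"
  assumes "finite Q" "\<forall>q\<in>Q. ignores_coord j (w q)"
    and M: "(\<Sum>q\<in>Q. fscale (c q) (tensor_at j (u q) (w q))) \<in> fs.span ((\<lambda>a. tensor_at j (u a) (w a)) ` P)"
    and "\<forall>q\<in>P. ignores_coord j (w q)"
    and BQ: "BQ \<subseteq> Q" "inj_on u BQ" "fs.independent (u ` BQ)" and "b \<in> BQ" "c b \<noteq> 0"
  shows "w b \<in> fs.span (w ` (Q - BQ) \<union> (fs.span (w ` Q) \<inter> fs.span (w ` P)))"
proof -
  let ?T = "w ` (Q - BQ) \<union> (fs.span (w ` Q) \<inter> fs.span (w ` P))"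
  obtain f where f: "Vector_Spaces.linear fscale (*) f" "\<And>q. q \<in> BQ \<Longrightarrow> f (u q) = (if q = b then 1 else 0)"
    using obtain_dual_functional[OF BQ(2,3) \<open>b \<in> BQ\<close>] by blast
  define v where "v q = fscale (c q) (fscale (f (u q)) (w q))" for q
  define \<omega> where "\<omega> = contract j f (\<Sum>q\<in>Q. fscale (c q) (tensor_at j (u q) (w q)))"
  have \<omega>: "\<omega> = (\<Sum>q\<in>Q. v q)"
    unfolding \<omega>_def v_def fs_pair.linear_sum[OF linear_contract[OF f(1)]]
    using assms(2) by (intro sum.cong) (simp_all add: fs_pair.linear_scale[OF linear_contract[OF f(1)]]
        contract_tensor_at[OF f(1)])
  have "(\<Sum>q\<in>BQ. v q) = v b"
    using f(2) \<open>b \<in> BQ\<close> \<open>finite Q\<close> BQ(1) finite_subset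
    by (subst sum.remove[of BQ b]) (auto simp: v_def fscale_def fun_eq_iff intro!: sum.neutral)
  then have eq: "fscale (c b) (w b) = \<omega> - (\<Sum>q\<in>Q - BQ. v q)"
    using sum.subset_diff[OF BQ(1) \<open>finite Q\<close>, of v] f(2)[OF \<open>b \<in> BQ\<close>] \<omega> by (simp add: v_def)
  have "\<omega> \<in> fs.span (w ` Q)"
    unfolding \<omega> v_def by (intro fs.span_sum fs.span_scale fs.span_base) auto
  moreover have "\<omega> \<in> fs.span (w ` P)"
    unfolding \<omega>_def using contract_in_span[OF f(1) M assms(4)] .
  ultimately have "\<omega> \<in> fs.span ?T"
    by (auto intro: fs.span_base)
  moreover have "(\<Sum>q\<in>Q - BQ. v q) \<in> fs.span ?T"
    unfolding v_def by (intro fs.span_sum fs.span_scale fs.span_base) auto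
  ultimately have "fscale (c b) (w b) \<in> fs.span ?T"
    unfolding eq by (rule fs.span_diff)
  then show ?thesis
    using \<open>c b \<noteq> 0\<close> by (rule in_span_of_fscale_in_span)
qed

lemma dims_le_card_add_dim_span_Int:
  fixes u :: "'i \<Rightarrow> 'b \<Rightarrow> 'a::field" and w :: "'i \<Rightarrow> (nat \<Rightarrow> 'b) \<Rightarrow> 'a"
  assumes "finite Q" "finite P" "\<forall>q\<in>Q \<union> P. ignores_coord j (w q)" "\<forall>q\<in>Q. c q \<noteq> 0"
    and M: "(\<Sum>q\<in>Q. fscale (c q) (tensor_at j (u q) (w q))) \<in> fs.span ((\<lambda>a. tensor_at j (u a) (w a)) ` P)"
  shows "fs.dim (u ` Q) + fs.dim (w ` Q) \<le> card Q + fs.dim (fs.span (w ` Q) \<inter> fs.span (w ` P))"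
proof -
  let ?K = "fs.span (w ` Q) \<inter> fs.span (w ` P)"
  obtain BQ where BQ: "BQ \<subseteq> Q" "inj_on u BQ" "fs.independent (u ` BQ)" "card BQ = fs.dim (u ` Q)"
    using obtain_independent_subfamily[OF \<open>finite Q\<close>] by metis
  obtain C where C: "C \<subseteq> ?K" "fs.independent C" "?K \<subseteq> fs.span C" "card C = fs.dim ?K"
    by (rule fs.basis_exists)
  have "finite C"
    using fs.independent_span_bound[of "w ` Q" C] C(1,2) \<open>finite Q\<close> by blast
  have "w q \<in> fs.span (w ` (Q - BQ) \<union> C)" if "q \<in> Q" for q
  proof (cases "q \<in> BQ")
    case True
    then have "w q \<in> fs.span (w ` (Q - BQ) \<union> ?K)"
      using contracted_factor_in_span[OF \<open>finite Q\<close> _ M _ BQ(1-3)] assms(3,4) BQ(1) by blast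
    also have "\<dots> \<subseteq> fs.span (w ` (Q - BQ) \<union> C)"
      using C(3) fs.span_superset[of "w ` (Q - BQ) \<union> C"] fs.span_mono[of C "w ` (Q - BQ) \<union> C"]
      by (intro fs.span_minimal) auto
    finally show ?thesis .
  qed (use that in \<open>auto intro: fs.span_base\<close>)
  then have "fs.dim (w ` Q) \<le> card (w ` (Q - BQ) \<union> C)"
    using \<open>finite Q\<close> \<open>finite C\<close> by (intro fs.dim_le_card) auto
  also have "\<dots> \<le> card (Q - BQ) + card C"
    using card_Un_le[of "w ` (Q - BQ)" C] card_image_le[of "Q - BQ" w] \<open>finite Q\<close> by simp
  also have "\<dots> = card Q - card BQ + fs.dim ?K"
    using card_Diff_subset[OF finite_subset[OF BQ(1) \<open>finite Q\<close>] BQ(1)] C(4) by simp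
  finally show ?thesis
    using BQ(4) card_mono[OF \<open>finite Q\<close> BQ(1)] by linarith
qed

lemma dim_span_Int_left_factors_pos:
  fixes u :: "'i \<Rightarrow> 'b \<Rightarrow> 'a::field" and w :: "'i \<Rightarrow> (nat \<Rightarrow> 'b) \<Rightarrow> 'a"
  assumes "finite Q" "\<forall>q\<in>Q \<union> P. ignores_coord j (w q)"
    and "M \<in> fs.span ((\<lambda>a. tensor_at j (u a) (w a)) ` Q)"
    and "M \<in> fs.span ((\<lambda>a. tensor_at j (u a) (w a)) ` P)" "M \<noteq> 0"
  shows "1 \<le> fs.dim (fs.span (u ` Q) \<inter> fs.span (u ` P))"
proof -
  obtain i where i: "M i \<noteq> 0"
    using \<open>M \<noteq> 0\<close> by (auto simp: fun_eq_iff)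
  have "fiber j i M \<in> fs.span (u ` Q)" "fiber j i M \<in> fs.span (u ` P)"
    using fiber_in_span[OF assms(3)] fiber_in_span[OF assms(4)] assms(2) by simp_all
  moreover have "fiber j i M \<noteq> 0"
    using i by (auto simp: fiber_def fun_eq_iff intro!: exI[of _ "i j"])
  ultimately show ?thesis
    using \<open>finite Q\<close> by (intro dim_pos_of_nonzero[of "u ` Q" _ "fiber j i M"]) auto
qed

lemma dims_Un_le_card_add:
  fixes u :: "'i \<Rightarrow> 'b \<Rightarrow> 'a::field" and w :: "'i \<Rightarrow> (nat \<Rightarrow> 'b) \<Rightarrow> 'a"
    and Q P :: "'i set" and c :: "'i \<Rightarrow> 'a" and j :: nat
  defines "M \<equiv> \<Sum>q\<in>Q. fscale (c q) (tensor_at j (u q) (w q))"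
  assumes fin: "finite Q" "finite P" and ign: "\<forall>q\<in>Q \<union> P. ignores_coord j (w q)"
    and c: "\<forall>q\<in>Q. c q \<noteq> 0"
    and MP: "M \<in> fs.span ((\<lambda>a. tensor_at j (u a) (w a)) ` P)" and "M \<noteq> 0"
    and P: "fs.dim (u ` P) + fs.dim (w ` P) \<le> card P + 1"
  shows "fs.dim (u ` (Q \<union> P)) + fs.dim (w ` (Q \<union> P)) \<le> card Q + card P"
proof -
  have "M \<in> fs.span ((\<lambda>a. tensor_at j (u a) (w a)) ` Q)"
    unfolding M_def by (intro fs.span_sum fs.span_scale fs.span_base) auto
  then have "1 \<le> fs.dim (fs.span (u ` Q) \<inter> fs.span (u ` P))"
    using dim_span_Int_left_factors_pos[OF fin(1) ign _ MP \<open>M \<noteq> 0\<close>] by blast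
  moreover have "fs.dim (u ` Q) + fs.dim (w ` Q) \<le> card Q + fs.dim (fs.span (w ` Q) \<inter> fs.span (w ` P))"
    using dims_le_card_add_dim_span_Int[OF fin ign c] MP unfolding M_def by blast
  moreover have "fs.dim (u ` Q \<union> u ` P) + fs.dim (fs.span (u ` Q) \<inter> fs.span (u ` P))
      \<le> fs.dim (u ` Q) + fs.dim (u ` P)"
    using dim_Un_add_dim_span_Int_le fin by blast
  moreover have "fs.dim (w ` Q \<union> w ` P) + fs.dim (fs.span (w ` Q) \<inter> fs.span (w ` P))
      \<le> fs.dim (w ` Q) + fs.dim (w ` P)"
    using dim_Un_add_dim_span_Int_le fin by blast
  ultimately show ?thesis
    using P by (simp add: image_Un)
qed

section \<open>Connected families\<close>

definition connected_family :: "'i set \<Rightarrow> ('i \<Rightarrow> 'c \<Rightarrow> 'a::field) \<Rightarrow> bool"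
  where "connected_family Y z \<longleftrightarrow>
    (\<forall>S\<subseteq>Y. S \<noteq> {} \<longrightarrow> S \<noteq> Y \<longrightarrow> fs.span (z ` S) \<inter> fs.span (z ` (Y - S)) \<noteq> {0})"

lemma connected_family_tensor_at_right:
  assumes "connected_family Y (\<lambda>a. tensor_at j (u a) (w a))" "\<forall>a\<in>Y. ignores_coord j (w a)"
  shows "connected_family Y w"
  unfolding connected_family_def
proof (intro allI impI)
  fix S assume S: "S \<subseteq> Y" "S \<noteq> {}" "S \<noteq> Y"
  let ?t = "\<lambda>a. tensor_at j (u a) (w a)"
  have "v = 0" if W: "fs.span (w ` S) \<inter> fs.span (w ` (Y - S)) = {0}"
    and v: "v \<in> fs.span (?t ` S)" "v \<in> fs.span (?t ` (Y - S))" for v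
  proof -
    have "contract j (\<lambda>u. u c) v \<in> fs.span (w ` S) \<inter> fs.span (w ` (Y - S))" for c
      using contract_in_span[OF linear_eval v(1)] contract_in_span[OF linear_eval v(2)]
        S(1) assms(2) by auto
    then have "contract j (\<lambda>u. u (i j)) v i = 0" for i
      using W by simp
    then show "v = 0"
      by (simp add: contract_eval fun_eq_iff)
  qed
  then have "fs.span (w ` S) \<inter> fs.span (w ` (Y - S)) = {0} \<Longrightarrow>
      fs.span (?t ` S) \<inter> fs.span (?t ` (Y - S)) = {0}"
    using fs.span_zero by blast
  then show "fs.span (w ` S) \<inter> fs.span (w ` (Y - S)) \<noteq> {0}"
    using assms(1) S unfolding connected_family_def by blast
qed

lemma sum_fscale_neutral:
  fixes z :: "'i \<Rightarrow> 'c \<Rightarrow> 'a::field"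
  assumes "finite B" "G \<subseteq> B" "\<forall>b\<in>B - G. g b = 0"
  shows "(\<Sum>b\<in>B. fscale (g b) (z b)) = (\<Sum>b\<in>G. fscale (g b) (z b))"
  using assms by (intro sum.mono_neutral_right) (auto simp: fscale_def fun_eq_iff)

lemma connected_family_coeffs_straddle:
  fixes t :: "'i \<Rightarrow> 'c \<Rightarrow> 'a::field"
  assumes "finite Y" "B \<subseteq> Y" "inj_on t B" "fs.independent (t ` B)"
    and rep: "\<forall>a\<in>Y. t a = (\<Sum>b\<in>B. fscale (\<gamma> a b) (t b))"
    and "connected_family Y t" and P: "P \<subseteq> B" "P \<noteq> {}" "P \<noteq> B"
  shows "\<exists>a\<in>Y - B. (\<exists>b\<in>P. \<gamma> a b \<noteq> 0) \<and> (\<exists>b\<in>B - P. \<gamma> a b \<noteq> 0)"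
proof (rule ccontr)
  assume no_straddle: "\<not> ?thesis"
  have "finite B"
    using assms(1,2) finite_subset by blast
  have in_span: "t a \<in> fs.span (t ` G)" if "a \<in> Y" "G \<subseteq> B" "\<forall>b\<in>B - G. \<gamma> a b = 0" for a G
  proof -
    have "t a = (\<Sum>b\<in>G. fscale (\<gamma> a b) (t b))"
      using rep that(1) sum_fscale_neutral[OF \<open>finite B\<close> that(2,3)] by simp
    also have "\<dots> \<in> fs.span (t ` G)"
      by (intro fs.span_sum fs.span_scale fs.span_base) auto
    finally show ?thesis .
  qed
  define S where "S = P \<union> {a\<in>Y - B. \<forall>b\<in>B - P. \<gamma> a b = 0}"
  have "t ` S \<subseteq> fs.span (t ` P)"
    using in_span[OF _ P(1)] by (auto simp: S_def intro: fs.span_base)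
  then have SP: "fs.span (t ` S) \<subseteq> fs.span (t ` P)"
    by (simp add: fs.span_minimal)
  have "t ` (Y - S) \<subseteq> fs.span (t ` (B - P))"
    using in_span[of _ "B - P"] no_straddle by (auto simp: S_def intro: fs.span_base)
  then have SBP: "fs.span (t ` (Y - S)) \<subseteq> fs.span (t ` (B - P))"
    by (simp add: fs.span_minimal)
  have "fs.span (t ` S) \<inter> fs.span (t ` (Y - S)) = {0}"
    using independent_image_span_disjoint[OF \<open>finite B\<close> assms(3,4) P(1)] SP SBP fs.span_zero
    by blast
  moreover have "S \<subseteq> Y" "S \<noteq> {}" "S \<noteq> Y"
    using P assms(2) by (auto simp: S_def)
  ultimately show False
    using \<open>connected_family Y t\<close> unfolding connected_family_def by blast
qed

lemma dims_extend_by_coeff_support: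
  fixes u :: "'i \<Rightarrow> 'b \<Rightarrow> 'a::field" and w :: "'i \<Rightarrow> (nat \<Rightarrow> 'b) \<Rightarrow> 'a"
    and j :: nat and B :: "'i set" and \<gamma> :: "'i \<Rightarrow> 'a"
  defines "t \<equiv> \<lambda>a. tensor_at j (u a) (w a)" and "G \<equiv> {b\<in>B. \<gamma> b \<noteq> 0}"
  assumes B: "finite B" "inj_on t B" "fs.independent (t ` B)"
    and a: "t a = (\<Sum>b\<in>B. fscale (\<gamma> b) (t b))" "a \<notin> B"
    and ign: "\<forall>q\<in>insert a B. ignores_coord j (w q)"
    and P: "P \<subseteq> B" "fs.dim (u ` P) + fs.dim (w ` P) \<le> card P + 1"
    and "b1 \<in> P" "\<gamma> b1 \<noteq> 0"
  shows "fs.dim (u ` (P \<union> G)) + fs.dim (w ` (P \<union> G)) \<le> card (P \<union> G) + 1"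
proof -
  define Q where "Q = insert a (G - P)"
  define c where "c q = (if q = a then 1 else - \<gamma> q)" for q
  define M where "M = (\<Sum>b\<in>P. fscale (\<gamma> b) (t b))"
  have fin: "finite G" "finite P" "finite Q"
    using B(1) P(1) finite_subset by (auto simp: G_def Q_def)
  have "a \<notin> G - P"
    using a(2) by (auto simp: G_def)
  have "(\<Sum>b\<in>B - P. fscale (\<gamma> b) (t b)) = (\<Sum>b\<in>G - P. fscale (\<gamma> b) (t b))"
    using B(1) by (intro sum_fscale_neutral) (auto simp: G_def)
  then have ta: "t a = M + (\<Sum>b\<in>G - P. fscale (\<gamma> b) (t b))"
    using a(1) sum.subset_diff[OF P(1) B(1), of "\<lambda>b. fscale (\<gamma> b) (t b)"]
    by (simp add: M_def add.commute)
  have "(\<Sum>q\<in>G - P. fscale (c q) (t q)) = (\<Sum>b\<in>G - P. - fscale (\<gamma> b) (t b))"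
    using \<open>a \<notin> G - P\<close> by (intro sum.cong) (auto simp: c_def fs.scale_minus_left)
  then have "(\<Sum>q\<in>Q. fscale (c q) (t q)) = M"
    using \<open>a \<notin> G - P\<close> fin(1) ta by (simp add: Q_def c_def sum_negf)
  moreover have "M \<noteq> 0"
  proof
    define \<delta> where "\<delta> b = (if b \<in> P then \<gamma> b else 0)" for b
    assume "M = 0"
    have "(\<Sum>b\<in>B. fscale (\<delta> b) (t b)) = (\<Sum>b\<in>P. fscale (\<delta> b) (t b))"
      using B(1) P(1) by (intro sum_fscale_neutral) (auto simp: \<delta>_def)
    also have "\<dots> = M"
      unfolding M_def \<delta>_def by (intro sum.cong) auto
    finally have "\<delta> b1 = 0"
      using independent_image_coeffs_zero[OF B] \<open>M = 0\<close> \<open>b1 \<in> P\<close> P(1) by blast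
    then show False
      using \<open>b1 \<in> P\<close> \<open>\<gamma> b1 \<noteq> 0\<close> by (simp add: \<delta>_def)
  qed
  moreover have "M \<in> fs.span (t ` P)"
    unfolding M_def by (intro fs.span_sum fs.span_scale fs.span_base) auto
  moreover have "\<forall>q\<in>Q \<union> P. ignores_coord j (w q)" "\<forall>q\<in>Q. c q \<noteq> 0"
    using ign P(1) by (auto simp: Q_def G_def c_def)
  ultimately have "fs.dim (u ` (Q \<union> P)) + fs.dim (w ` (Q \<union> P)) \<le> card Q + card P"
    using dims_Un_le_card_add[OF fin(3,2)] P(2) unfolding t_def by blast
  moreover have "card Q + card P = card (P \<union> G) + 1"
    using card_Un_disjoint[of P "G - P"] \<open>a \<notin> G - P\<close> fin by (simp add: Q_def)
  moreover have mono: "fs.dim (v ` (P \<union> G)) \<le> fs.dim (v ` (Q \<union> P))" for v :: "'i \<Rightarrow> 'c \<Rightarrow> 'a"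
  proof (rule dim_le_dim_of_subset_span)
    show "v ` (P \<union> G) \<subseteq> fs.span (v ` (Q \<union> P))"
      using fs.span_superset[of "v ` (Q \<union> P)"] by (auto simp: Q_def)
  qed (use fin in simp)
  ultimately show ?thesis
    using mono[of u] mono[of w] by linarith
qed

text \<open>A largest \<open>P \<subseteq> B\<close> satisfying the bound is all of \<open>B\<close>: otherwise connectivity yields an
  \<open>a\<close> whose coefficients straddle \<open>P\<close>, and adding their support to \<open>P\<close> keeps the bound.\<close>

lemma dims_le_card_of_independent_subfamily:
  fixes u :: "'i \<Rightarrow> 'b \<Rightarrow> 'a::field" and w :: "'i \<Rightarrow> (nat \<Rightarrow> 'b) \<Rightarrow> 'a"
    and j :: nat and Y B :: "'i set"
  defines "t \<equiv> \<lambda>a. tensor_at j (u a) (w a)"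
  assumes Y: "finite Y" "\<forall>a\<in>Y. ignores_coord j (w a)" "connected_family Y t"
    and B: "B \<subseteq> Y" "B \<noteq> {}" "inj_on t B" "fs.independent (t ` B)"
    and rep: "\<forall>a\<in>Y. t a = (\<Sum>b\<in>B. fscale (\<gamma> a b) (t b))"
  shows "fs.dim (u ` B) + fs.dim (w ` B) \<le> card B + 1"
proof -
  define good where "good P \<longleftrightarrow> P \<subseteq> B \<and> P \<noteq> {} \<and> fs.dim (u ` P) + fs.dim (w ` P) \<le> card P + 1"
    for P
  have "finite B"
    using B(1) Y(1) finite_subset by blast
  obtain b0 where "b0 \<in> B"
    using B(2) by blast
  moreover have "fs.dim (u ` {b0}) \<le> 1" "fs.dim (w ` {b0}) \<le> 1"
    using fs.dim_le_card'[of "u ` {b0}"] fs.dim_le_card'[of "w ` {b0}"] by simp_all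
  ultimately have "good {b0}"
    by (simp add: good_def)
  moreover have "\<forall>P. good P \<longrightarrow> card P < Suc (card B)"
    using card_mono[OF \<open>finite B\<close>] by (auto simp: good_def less_Suc_eq_le)
  ultimately obtain P where "good P" and P_max: "\<And>P'. good P' \<Longrightarrow> card P' \<le> card P"
    using ex_has_greatest_nat[of good "{b0}" card "Suc (card B)"] by blast
  have P: "P \<subseteq> B" "P \<noteq> {}" "fs.dim (u ` P) + fs.dim (w ` P) \<le> card P + 1"
    using \<open>good P\<close> by (simp_all add: good_def)
  have "P = B"
  proof (rule ccontr)
    assume "P \<noteq> B"
    then obtain a b1 b2 where a: "a \<in> Y - B" and b1: "b1 \<in> P" "\<gamma> a b1 \<noteq> 0"
      and b2: "b2 \<in> B - P" "\<gamma> a b2 \<noteq> 0"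
      using connected_family_coeffs_straddle[OF Y(1) B(1,3,4) rep Y(3) P(1,2)] by blast
    let ?P' = "P \<union> {b\<in>B. \<gamma> a b \<noteq> 0}"
    have ta: "tensor_at j (u a) (w a) = (\<Sum>b\<in>B. fscale (\<gamma> a b) (tensor_at j (u b) (w b)))"
      using rep a unfolding t_def by blast
    have "\<forall>q\<in>insert a B. ignores_coord j (w q)"
      using Y(2) B(1) a by blast
    then have "fs.dim (u ` ?P') + fs.dim (w ` ?P') \<le> card ?P' + 1"
      using dims_extend_by_coeff_support[OF \<open>finite B\<close> B(3,4)[unfolded t_def] ta _ _ P(1,3) b1] a
      by blast
    then have "good ?P'"
      using P(1,2) by (auto simp: good_def)
    moreover have "card P < card ?P'"
      using b2 P(1) \<open>finite B\<close> by (intro psubset_card_mono) (auto intro: finite_subset)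
    ultimately show False
      using P_max by fastforce
  qed
  then show ?thesis
    using \<open>good P\<close> by (simp add: good_def)
qed

lemma connected_family_dim_tensor_at:
  fixes u :: "'i \<Rightarrow> 'b \<Rightarrow> 'a::field" and w :: "'i \<Rightarrow> (nat \<Rightarrow> 'b) \<Rightarrow> 'a"
  assumes Y: "finite Y" "\<forall>a\<in>Y. ignores_coord j (w a)" "\<forall>a\<in>Y. tensor_at j (u a) (w a) \<noteq> 0"
    and conn: "connected_family Y (\<lambda>a. tensor_at j (u a) (w a))"
  shows "fs.dim (u ` Y) + fs.dim (w ` Y) \<le> fs.dim ((\<lambda>a. tensor_at j (u a) (w a)) ` Y) + 1"
proof -
  let ?t = "\<lambda>a. tensor_at j (u a) (w a)"
  obtain B where B: "B \<subseteq> Y" "inj_on ?t B" "fs.independent (?t ` B)"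
    "fs.span (?t ` B) = fs.span (?t ` Y)" "card B = fs.dim (?t ` Y)"
    by (rule obtain_independent_subfamily[OF Y(1)])
  have "finite B"
    using B(1) Y(1) finite_subset by blast
  have ignB: "\<forall>a\<in>B. ignores_coord j (w a)"
    using Y(2) B(1) by blast
  have in_span: "?t a \<in> fs.span (?t ` B)" if "a \<in> Y" for a
    unfolding B(4) using that by (intro fs.span_base imageI)
  have "\<forall>a\<in>Y. \<exists>\<gamma>. ?t a = (\<Sum>b\<in>B. fscale (\<gamma> b) (?t b))"
    using obtain_span_image_coeffs[OF \<open>finite B\<close> B(2) in_span] by blast
  from bchoice[OF this] obtain \<gamma> where rep: "\<forall>a\<in>Y. ?t a = (\<Sum>b\<in>B. fscale (\<gamma> a b) (?t b))"
    by blast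
  show ?thesis
  proof (cases "Y = {}")
    case False
    then obtain a where "a \<in> Y"
      by blast
    then have "B \<noteq> {}"
      using in_span[of a] Y(3) by auto
    have "u a \<in> fs.span (u ` B)" "w a \<in> fs.span (w ` B)" if "a \<in> Y" for a
      using tensor_at_factors_in_span[OF in_span[OF that]] Y(2,3) ignB that by simp_all
    then have "fs.dim (u ` Y) \<le> fs.dim (u ` B)" "fs.dim (w ` Y) \<le> fs.dim (w ` B)"
      using \<open>finite B\<close> by (auto intro!: dim_le_dim_of_subset_span)
    then have "fs.dim (u ` Y) + fs.dim (w ` Y) \<le> fs.dim (u ` B) + fs.dim (w ` B)"
      by simp
    also have "\<dots> \<le> card B + 1"
      using dims_le_card_of_independent_subfamily[OF Y(1,2) conn B(1) \<open>B \<noteq> {}\<close> B(2,3) rep] .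
    finally show ?thesis
      using B(5) by simp
  next
    case True
    then show ?thesis
      using fs.dim_le_card'[of "{} :: ('b \<Rightarrow> 'a) set"]
        fs.dim_le_card'[of "{} :: ((nat \<Rightarrow> 'b) \<Rightarrow> 'a) set"] by simp
  qed
qed

definition tprod_on :: "nat set \<Rightarrow> (nat \<Rightarrow> 'b \<Rightarrow> 'a) \<Rightarrow> (nat \<Rightarrow> 'b) \<Rightarrow> 'a::field"
  where "tprod_on J z = (\<lambda>i. \<Prod>j\<in>J. z j (i j))"

lemma tprod_eq_tprod_on: "tprod m z = tprod_on {1..m} z"
  by (simp add: tprod_def tprod_on_def)

lemma tprod_on_insert:
  "finite J \<Longrightarrow> j \<notin> J \<Longrightarrow> tprod_on (insert j J) z = tensor_at j (z j) (tprod_on J z)"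
  by (simp add: tprod_on_def tensor_at_def fun_eq_iff)

lemma ignores_coord_tprod_on: "j \<notin> J \<Longrightarrow> ignores_coord j (tprod_on J z)"
  unfolding ignores_coord_def tprod_on_def by (auto intro!: prod.cong)

lemma connected_family_dim_tprod_on:
  fixes z :: "'i \<Rightarrow> nat \<Rightarrow> 'b \<Rightarrow> 'a::field"
  assumes "finite J" "finite Y" "Y \<noteq> {}"
    and "\<forall>a\<in>Y. tprod_on J (z a) \<noteq> 0" "connected_family Y (\<lambda>a. tprod_on J (z a))"
  shows "(\<Sum>j\<in>J. fs.dim ((\<lambda>a. z a j) ` Y)) + 1 \<le> fs.dim ((\<lambda>a. tprod_on J (z a)) ` Y) + card J"
  using assms(1,4,5)
proof (induction J rule: finite_induct)
  case empty
  have "(\<lambda>a. tprod_on {} (z a)) ` Y = {\<lambda>i. 1}"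
    using \<open>Y \<noteq> {}\<close> by (auto simp: tprod_on_def)
  moreover have "1 \<le> fs.dim {(\<lambda>i. 1) :: (nat \<Rightarrow> 'b) \<Rightarrow> 'a}"
    by (rule dim_pos_of_nonzero[of "{\<lambda>i. 1}"]) (auto simp: fun_eq_iff fs.span_superset)
  ultimately show ?case
    by simp
next
  case (insert j J)
  let ?u = "\<lambda>a. z a j" and ?w = "\<lambda>a. tprod_on J (z a)"
  have split: "(\<lambda>a. tprod_on (insert j J) (z a)) = (\<lambda>a. tensor_at j (?u a) (?w a))"
    using tprod_on_insert[OF insert(1,2)] by auto
  have ign: "\<forall>a\<in>Y. ignores_coord j (?w a)"
    using ignores_coord_tprod_on[OF insert(2)] by blast
  have nz: "\<forall>a\<in>Y. tensor_at j (?u a) (?w a) \<noteq> 0"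
    using insert(4) split by metis
  have conn: "connected_family Y (\<lambda>a. tensor_at j (?u a) (?w a))"
    using insert(5) split by metis
  have "(\<Sum>j\<in>J. fs.dim ((\<lambda>a. z a j) ` Y)) + 1 \<le> fs.dim (?w ` Y) + card J"
    using insert(3) nz tensor_at_nonzero(2) connected_family_tensor_at_right[OF conn ign] by blast
  moreover have "fs.dim (?u ` Y) + fs.dim (?w ` Y)
      \<le> fs.dim ((\<lambda>a. tensor_at j (?u a) (?w a)) ` Y) + 1"
    by (rule connected_family_dim_tensor_at[OF \<open>finite Y\<close> ign nz conn])
  ultimately show ?case
    unfolding split using insert(1,2) by simp
qed

lemma minimal_zero_sum_connected:
  fixes z :: "'i \<Rightarrow> 'c \<Rightarrow> 'a::field"
  assumes "finite I" "(\<Sum>a\<in>I. z a) = 0"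
    and minimal: "\<forall>S\<subseteq>I. S \<noteq> {} \<longrightarrow> S \<noteq> I \<longrightarrow> (\<Sum>a\<in>S. z a) \<noteq> 0"
  shows "connected_family I z"
  unfolding connected_family_def
proof (intro allI impI)
  fix S assume S: "S \<subseteq> I" "S \<noteq> {}" "S \<noteq> I"
  have "(\<Sum>a\<in>S. z a) = - (\<Sum>a\<in>I - S. z a)"
    using sum.subset_diff[OF S(1) assms(1), of z] assms(2) by (simp add: add_eq_0_iff)
  then have "(\<Sum>a\<in>S. z a) \<in> fs.span (z ` (I - S))"
    by (auto intro: fs.span_neg fs.span_sum fs.span_base)
  moreover have "(\<Sum>a\<in>S. z a) \<in> fs.span (z ` S)"
    by (intro fs.span_sum fs.span_base) auto
  moreover have "(\<Sum>a\<in>S. z a) \<noteq> 0"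
    using minimal S by blast
  ultimately show "fs.span (z ` S) \<inter> fs.span (z ` (I - S)) \<noteq> {0}"
    by blast
qed

lemma zero_sum_dim_lt_card:
  fixes z :: "'i \<Rightarrow> 'c \<Rightarrow> 'a::field"
  assumes "finite I" "I \<noteq> {}" "(\<Sum>a\<in>I. z a) = 0"
  shows "fs.dim (z ` I) < card I"
proof -
  obtain a0 where "a0 \<in> I"
    using assms(2) by blast
  have "z a0 = - (\<Sum>a\<in>I - {a0}. z a)"
    using sum.remove[OF assms(1) \<open>a0 \<in> I\<close>, of z] assms(3) by (simp add: eq_neg_iff_add_eq_0)
  then have "z a0 \<in> fs.span (z ` (I - {a0}))"
    by (auto intro: fs.span_neg fs.span_sum fs.span_base)
  then have "z ` I \<subseteq> fs.span (z ` (I - {a0}))"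
    by (auto intro: fs.span_base)
  then have "fs.dim (z ` I) \<le> card (z ` (I - {a0}))"
    using assms(1) by (intro fs.dim_le_card) auto
  also have "\<dots> < card I"
    using card_image_le[of "I - {a0}" z] assms(1) \<open>a0 \<in> I\<close> card_Diff1_less[of I a0] by simp
  finally show ?thesis .
qed

lemma minimal_zero_sum_dims_bound:
  fixes z :: "'i \<Rightarrow> nat \<Rightarrow> 'b \<Rightarrow> 'a::field"
  assumes "finite J" "finite I" "I \<noteq> {}" "\<forall>a\<in>I. tprod_on J (z a) \<noteq> 0"
    and "(\<Sum>a\<in>I. tprod_on J (z a)) = 0"
    and "\<forall>S\<subseteq>I. S \<noteq> {} \<longrightarrow> S \<noteq> I \<longrightarrow> (\<Sum>a\<in>S. tprod_on J (z a)) \<noteq> 0"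
  shows "(\<Sum>j\<in>J. fs.dim ((\<lambda>a. z a j) ` I)) + 2 \<le> card I + card J"
  using connected_family_dim_tprod_on[OF assms(1-4) minimal_zero_sum_connected[OF assms(2,5,6)]]
    zero_sum_dim_lt_card[OF assms(2,3,5)] by linarith

section \<open>Minimal decompositions and tensor rank\<close>

definition sum_match :: "('i \<Rightarrow> 'v::comm_monoid_add) \<Rightarrow> ('k \<Rightarrow> 'v) \<Rightarrow> 'i set \<Rightarrow> 'k set \<Rightarrow> bool"
  where "sum_match X Y Q R \<longleftrightarrow> Q \<noteq> {} \<and> card R \<le> card Q \<and> (\<Sum>a\<in>Q. X a) = (\<Sum>b\<in>R. Y b)"

lemma Plus_Inl_Inr_preimages: "S = {a. Inl a \<in> S} <+> {b. Inr b \<in> S}"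
  by (auto simp: Plus_def image_iff) (metis sum.exhaust)

lemma minimal_sum_match_zero_sum_free:
  fixes X :: "'i \<Rightarrow> 'v::ab_group_add" and Y :: "'k \<Rightarrow> 'v"
  assumes fin: "finite A" "finite B" and "sum_match X Y A B"
    and minimal: "\<And>Q R. Q \<subseteq> A \<Longrightarrow> R \<subseteq> B \<Longrightarrow> sum_match X Y Q R \<Longrightarrow> card A + card B \<le> card Q + card R"
  shows "\<forall>S\<subseteq>A <+> B. S \<noteq> {} \<longrightarrow> S \<noteq> A <+> B \<longrightarrow> (\<Sum>s\<in>S. case_sum X (\<lambda>b. - Y b) s) \<noteq> 0"
proof (intro allI impI notI)
  fix S assume S: "S \<subseteq> A <+> B" "S \<noteq> {}" "S \<noteq> A <+> B"
    and zero: "(\<Sum>s\<in>S. case_sum X (\<lambda>b. - Y b) s) = 0"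
  define Q R where "Q = {a. Inl a \<in> S}" and "R = {b. Inr b \<in> S}"
  have SQR: "S = Q <+> R"
    unfolding Q_def R_def by (rule Plus_Inl_Inr_preimages)
  have "Q \<subseteq> A" "R \<subseteq> B"
    using S(1) unfolding Q_def R_def by auto
  then have QR: "Q \<subseteq> A" "R \<subseteq> B" "finite Q" "finite R"
    using fin finite_subset by auto
  have match: "(\<Sum>a\<in>Q. X a) = (\<Sum>b\<in>R. Y b)"
    using zero unfolding SQR by (simp add: sum.Plus QR(3,4) comp_def sum_negf)
  have match': "(\<Sum>a\<in>A - Q. X a) = (\<Sum>b\<in>B - R. Y b)"
    using \<open>sum_match X Y A B\<close> match sum.subset_diff[OF QR(1) fin(1), of X]
      sum.subset_diff[OF QR(2) fin(2), of Y] by (simp add: sum_match_def)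
  have cards: "card (A - Q) = card A - card Q" "card (B - R) = card B - card R"
    "card Q \<le> card A" "card R \<le> card B"
    using card_Diff_subset[OF QR(3,1)] card_Diff_subset[OF QR(4,2)] card_mono fin QR(1,2) by auto
  have pos: "0 < card Q + card R"
    using S(2) QR(3,4) unfolding SQR by (auto simp: card_gt_0_iff)
  have proper: "card Q + card R < card A + card B"
    using S(1,3) fin psubset_card_mono[of "A <+> B" S] unfolding SQR by (simp add: card_Plus QR(3,4))
  have "card B \<le> card A"
    using \<open>sum_match X Y A B\<close> by (simp add: sum_match_def)
  show False
  proof (cases "Q \<noteq> {} \<and> card R \<le> card Q")
    case True
    then show False
      using minimal[OF QR(1,2)] match proper by (force simp: sum_match_def)
  next
    case False
    then have "card Q < card R"
      using pos QR(3) by auto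
    then have "card (B - R) < card (A - Q)"
      using cards \<open>card B \<le> card A\<close> by linarith
    then have "sum_match X Y (A - Q) (B - R)"
      using match' unfolding sum_match_def by (metis card.empty less_nat_zero_code less_imp_le)
    then show False
      using minimal[of "A - Q" "B - R"] cards pos by auto
  qed
qed

lemma tprod_negate_first:
  assumes "1 \<le> m"
  shows "tprod m (z(1 := - z 1)) = - tprod m z"
proof -
  have "{1..m} = insert 1 {2..m}"
    using assms by auto
  then show ?thesis
    by (simp add: tprod_def fun_eq_iff)
qed

lemma factor_nonzero_of_ptensor:
  assumes "is_ptensor m z" "j \<in> {1..m}"
  shows "z j \<noteq> 0"
  using assms by (auto simp: is_ptensor_def tprod_def fun_eq_iff)

text \<open>Negating the first factor of each \<open>y b\<close> turns a minimal match into a vanishing sum of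
  product tensors over \<open>A <+> R\<close> without vanishing proper subsums.\<close>

lemma minimal_sum_match_card_bound:
  fixes x :: "'i \<Rightarrow> nat \<Rightarrow> 'b \<Rightarrow> 'a::field" and y :: "'k \<Rightarrow> nat \<Rightarrow> 'b \<Rightarrow> 'a"
  assumes "1 \<le> m" "finite A" "finite R"
    and ptensors: "\<forall>a\<in>A. is_ptensor m (x a)" "\<forall>b\<in>R. is_ptensor m (y b)"
    and match: "sum_match (\<lambda>a. tprod m (x a)) (\<lambda>b. tprod m (y b)) A R"
    and minimal: "\<And>Q R'. Q \<subseteq> A \<Longrightarrow> R' \<subseteq> R \<Longrightarrow>
      sum_match (\<lambda>a. tprod m (x a)) (\<lambda>b. tprod m (y b)) Q R' \<Longrightarrow> card A + card R \<le> card Q + card R'"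
  shows "(\<Sum>j\<in>{1..m}. fs.dim ((\<lambda>a. x a j) ` A) - 1) + 2 \<le> card A + card R"
proof -
  define g where "g = case_sum x (\<lambda>b. (y b)(1 := - y b 1))"
  let ?I = "A <+> R"
  have tg: "tprod_on {1..m} (g s) = case_sum (\<lambda>a. tprod m (x a)) (\<lambda>b. - tprod m (y b)) s" for s
    by (cases s)
      (simp_all only: g_def sum.case tprod_eq_tprod_on[symmetric] tprod_negate_first[OF assms(1)])
  have "A \<noteq> {}"
    using match by (simp add: sum_match_def)
  have "(\<Sum>s\<in>?I. tprod_on {1..m} (g s)) = 0"
    unfolding tg using match assms(2,3) by (simp add: sum.Plus comp_def sum_negf sum_match_def)
  moreover have "\<forall>S\<subseteq>?I. S \<noteq> {} \<longrightarrow> S \<noteq> ?I \<longrightarrow> (\<Sum>s\<in>S. tprod_on {1..m} (g s)) \<noteq> 0"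
    unfolding tg using minimal_sum_match_zero_sum_free[OF assms(2,3) match minimal] .
  moreover have "\<forall>s\<in>?I. tprod_on {1..m} (g s) \<noteq> 0"
    unfolding tg using ptensors by (auto simp: is_ptensor_def)
  ultimately have bound: "(\<Sum>j\<in>{1..m}. fs.dim ((\<lambda>s. g s j) ` ?I)) + 2 \<le> card ?I + m"
    using minimal_zero_sum_dims_bound[of "{1..m}" ?I g] \<open>A \<noteq> {}\<close> assms(2,3) by simp
  let ?d = "\<lambda>j. fs.dim ((\<lambda>a. x a j) ` A)"
  have dim_le: "?d j \<le> fs.dim ((\<lambda>s. g s j) ` ?I)" for j
  proof (rule dim_le_dim_of_subset_span)
    show "(\<lambda>a. x a j) ` A \<subseteq> fs.span ((\<lambda>s. g s j) ` ?I)"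
      using fs.span_superset by (force simp: g_def)
  qed (use assms(2,3) in simp)
  have dim_pos: "1 \<le> ?d j" if "j \<in> {1..m}" for j
  proof -
    obtain a where "a \<in> A"
      using \<open>A \<noteq> {}\<close> by blast
    then show ?thesis
      using factor_nonzero_of_ptensor[OF _ that] ptensors(1) assms(2)
      by (intro dim_pos_of_nonzero[of "(\<lambda>a. x a j) ` A" _ "x a j"]) (auto intro: fs.span_base)
  qed
  have "(\<Sum>j\<in>{1..m}. ?d j - 1) = (\<Sum>j\<in>{1..m}. ?d j) - m"
    using sum_subtractf_nat[of "{1..m}" "\<lambda>_. 1" ?d] dim_pos by simp
  moreover have "m \<le> (\<Sum>j\<in>{1..m}. ?d j)"
    using sum_mono[of "{1..m}" "\<lambda>_. 1" ?d] dim_pos by simp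
  moreover have "(\<Sum>j\<in>{1..m}. ?d j) \<le> (\<Sum>j\<in>{1..m}. fs.dim ((\<lambda>s. g s j) ` ?I))"
    using dim_le by (rule sum_mono)
  ultimately show ?thesis
    using bound assms(2,3) card_Plus[of A R] by linarith
qed

lemma vdim_factor_span: "vdim {x a j | a. a \<in> A} = fs.dim ((\<lambda>a. x a j) ` A)"
  by (simp add: vdim_def Setcompr_eq_image)

lemma exists_proper_sum_match:
  fixes x y :: "nat \<Rightarrow> nat \<Rightarrow> 'b \<Rightarrow> 'a::field"
  assumes "1 \<le> n" "1 \<le> m" "\<forall>a\<in>{1..n}. is_ptensor m (x a)" "r \<le> n"
    and dims: "n + r \<le> (\<Sum>j\<in>{1..m}. vdim {x a j | a. a \<in> {1..n}} - 1) + 1"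
    and "rt \<le> r" "\<forall>a\<in>{1..rt}. is_ptensor m (y a)"
    and "(\<Sum>a\<in>{1..n}. tprod m (x a)) = (\<Sum>a\<in>{1..rt}. tprod m (y a))"
  shows "\<exists>Q R. Q \<subseteq> {1..n} \<and> R \<subseteq> {1..rt} \<and> max 1 (card R) \<le> card Q \<and> card Q \<le> n - 1 \<and>
           (\<Sum>a\<in>Q. tprod m (x a)) = (\<Sum>a\<in>R. tprod m (y a))"
proof -
  let ?match = "sum_match (\<lambda>a. tprod m (x a)) (\<lambda>b. tprod m (y b))"
  define P where "P p \<longleftrightarrow> fst p \<subseteq> {1..n} \<and> snd p \<subseteq> {1..rt} \<and> ?match (fst p) (snd p)" for p
  have "P ({1..n}, {1..rt})"
    using assms by (auto simp: P_def sum_match_def)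
  then obtain p where "P p" and p_min: "\<And>p'. P p' \<Longrightarrow> card (fst p) + card (snd p) \<le> card (fst p') + card (snd p')"
    using ex_has_least_nat[of P _ "\<lambda>p. card (fst p) + card (snd p)"] by blast
  obtain Q R where "p = (Q, R)"
    by fastforce
  then have QR: "Q \<subseteq> {1..n}" "R \<subseteq> {1..rt}" "?match Q R" "finite Q" "finite R"
    using \<open>P p\<close> finite_subset by (auto simp: P_def)
  show ?thesis
  proof (cases "card Q \<le> n - 1")
    case True
    then show ?thesis
      using QR by (auto simp: sum_match_def Suc_le_eq card_gt_0_iff)
  next
    case False
    then have "Q = {1..n}"
      using QR(1) card_seteq[of "{1..n}" Q] by auto
    have "(\<Sum>j\<in>{1..m}. fs.dim ((\<lambda>a. x a j) ` {1..n}) - 1) + 2 \<le> card {1..n} + card R"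
    proof (rule minimal_sum_match_card_bound[OF assms(2) finite_atLeastAtMost QR(5) assms(3)])
      show "\<forall>b\<in>R. is_ptensor m (y b)"
        using assms(7) QR(2) by blast
      show "?match {1..n} R"
        using QR(3) \<open>Q = {1..n}\<close> by simp
      show "card {1..n} + card R \<le> card Q' + card R'"
        if "Q' \<subseteq> {1..n}" "R' \<subseteq> R" "?match Q' R'" for Q' R'
        using p_min[of "(Q', R')"] that QR(2) \<open>p = (Q, R)\<close> \<open>Q = {1..n}\<close> by (auto simp: P_def)
    qed
    moreover have "card R \<le> r"
      using card_mono[OF _ QR(2)] \<open>rt \<le> r\<close> by simp
    ultimately have False
      using dims unfolding vdim_factor_span by simp
    then show ?thesis ..
  qed
qed

lemma trank_le_card:
  fixes h :: "'i \<Rightarrow> nat \<Rightarrow> 'b \<Rightarrow> 'a::field"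
  assumes "finite A" "\<forall>a\<in>A. is_ptensor m (h a)"
  shows "trank m (\<Sum>a\<in>A. tprod m (h a)) \<le> card A"
proof -
  obtain \<sigma> where \<sigma>: "bij_betw \<sigma> {1..card A} A"
    using ex_bij_betw_nat_finite_1[OF assms(1)] by blast
  have "(\<Sum>a\<in>A. tprod m (h a)) = (\<Sum>k\<in>{1..card A}. tprod m (h (\<sigma> k)))"
    using sum.reindex_bij_betw[OF \<sigma>, of "\<lambda>a. tprod m (h a)"] by simp
  moreover have "\<forall>k\<in>{1..card A}. is_ptensor m (h (\<sigma> k))"
    using assms(2) bij_betwE[OF \<sigma>] by blast
  ultimately show ?thesis
    unfolding trank_def by (intro Least_le exI[of _ "\<lambda>k. h (\<sigma> k)"]) simp
qed

lemma obtain_trank_decomposition: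
  fixes y :: "nat \<Rightarrow> nat \<Rightarrow> 'b \<Rightarrow> 'a::field"
  assumes "\<forall>a\<in>{1..k}. is_ptensor m (y a)" "T = (\<Sum>a\<in>{1..k}. tprod m (y a))"
  obtains z :: "nat \<Rightarrow> nat \<Rightarrow> 'b \<Rightarrow> 'a"
  where "\<forall>a\<in>{1..trank m T}. is_ptensor m (z a)" "T = (\<Sum>a\<in>{1..trank m T}. tprod m (z a))"
proof -
  have "\<exists>z :: nat \<Rightarrow> nat \<Rightarrow> 'b \<Rightarrow> 'a. (\<forall>a\<in>{1..trank m T}. is_ptensor m (z a)) \<and>
      T = (\<Sum>a\<in>{1..trank m T}. tprod m (z a))"
    unfolding trank_def by (rule LeastI[of _ k]) (use assms in blast)
  then show ?thesis
    using that by blast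
qed

lemma exists_sub_equation_fewer_right:
  fixes X :: "'i \<Rightarrow> 'v::ab_group_add" and Y :: "'k \<Rightarrow> 'v"
  assumes fin: "finite A" "finite B" and eq: "(\<Sum>a\<in>A. X a) = (\<Sum>b\<in>B. Y b)"
    and "1 \<le> card B" "card B < card A"
    and QR: "Q \<subseteq> A" "R \<subseteq> B" "max 1 (card R) \<le> card Q" "card Q < card A"
    and eq_QR: "(\<Sum>a\<in>Q. X a) = (\<Sum>b\<in>R. Y b)"
  shows "\<exists>Q' R'. Q' \<subseteq> A \<and> R' \<subseteq> B \<and> card R' < card B \<and> card R' < card Q' \<and> card Q' < card A \<and>
    (\<Sum>a\<in>Q'. X a) = (\<Sum>b\<in>R'. Y b)"
proof (cases "card R < card Q \<and> card R < card B")
  case True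
  then show ?thesis
    using QR eq_QR by blast
next
  case False
  have "(\<Sum>a\<in>A - Q. X a) = (\<Sum>b\<in>B - R. Y b)"
    using eq eq_QR sum.subset_diff[OF QR(1) fin(1), of X] sum.subset_diff[OF QR(2) fin(2), of Y]
    by simp
  moreover have "card (A - Q) = card A - card Q" "card (B - R) = card B - card R" "card R \<le> card B"
    using card_Diff_subset card_mono fin QR(1,2) finite_subset by metis+
  ultimately show ?thesis
    using False QR(3,4) \<open>1 \<le> card B\<close> \<open>card B < card A\<close>
    by (intro exI[of _ "A - Q"] exI[of _ "B - R"]) auto
qed

lemma exists_subsum_of_lower_rank:
  fixes x :: "nat \<Rightarrow> nat \<Rightarrow> 'b \<Rightarrow> 'a::field"
  assumes "1 \<le> n" "1 \<le> m" and x: "\<forall>a\<in>{1..n}. is_ptensor m (x a)" and "r \<le> n"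
    and dims: "n + r \<le> (\<Sum>j\<in>{1..m}. vdim {x a j | a. a \<in> {1..n}} - 1) + 1"
    and rank: "1 \<le> trank m (\<Sum>a\<in>{1..n}. tprod m (x a))"
      "trank m (\<Sum>a\<in>{1..n}. tprod m (x a)) \<le> min r (n - 1)"
  shows "\<exists>S. S \<subseteq> {1..n} \<and> trank m (\<Sum>a\<in>{1..n}. tprod m (x a)) \<le> card S \<and> card S \<le> n - 1 \<and>
    trank m (\<Sum>a\<in>S. tprod m (x a)) < trank m (\<Sum>a\<in>{1..n}. tprod m (x a))"
proof -
  let ?X = "\<lambda>a. tprod m (x a)"
  define rt where "rt = trank m (\<Sum>a\<in>{1..n}. ?X a)"
  obtain y :: "nat \<Rightarrow> nat \<Rightarrow> 'b \<Rightarrow> 'a" where y: "\<forall>a\<in>{1..rt}. is_ptensor m (y a)"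
    and xy: "(\<Sum>a\<in>{1..n}. ?X a) = (\<Sum>a\<in>{1..rt}. tprod m (y a))"
    unfolding rt_def by (rule obtain_trank_decomposition[OF x refl])
  have "rt \<le> r" "1 \<le> rt" "rt < n"
    using rank \<open>1 \<le> n\<close> unfolding rt_def[symmetric] by auto
  obtain Q R where QR: "Q \<subseteq> {1..n}" "R \<subseteq> {1..rt}" "max 1 (card R) \<le> card Q" "card Q \<le> n - 1"
    "(\<Sum>a\<in>Q. ?X a) = (\<Sum>a\<in>R. tprod m (y a))"
    using exists_proper_sum_match[OF assms(1-5) \<open>rt \<le> r\<close> y xy] by blast
  have "card Q < n"
    using QR(4) \<open>1 \<le> n\<close> by linarith
  have cards: "card {1..rt} = rt" "card {1..n} = n"
    by simp_all
  obtain Q' R' where Q': "Q' \<subseteq> {1..n}" "R' \<subseteq> {1..rt}" "card R' < rt" "card R' < card Q'"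
      "card Q' < n" and eq: "(\<Sum>a\<in>Q'. ?X a) = (\<Sum>a\<in>R'. tprod m (y a))"
    using exists_sub_equation_fewer_right[OF finite_atLeastAtMost finite_atLeastAtMost xy, unfolded cards,
        OF \<open>1 \<le> rt\<close> \<open>rt < n\<close> QR(1-3) \<open>card Q < n\<close> QR(5)]
    by blast
  have fin: "finite Q'" "finite R'"
    using Q'(1,2) finite_subset by auto
  have "rt - card Q' \<le> card ({1..n} - Q')"
    using card_Diff_subset[OF fin(1) Q'(1)] \<open>rt < n\<close> by simp
  then obtain P where P: "P \<subseteq> {1..n} - Q'" "card P = rt - card Q'" "finite P"
    by (rule obtain_subset_with_card_n)
  have "(\<Sum>a\<in>Q' \<union> P. ?X a) = (\<Sum>a\<in>R'. tprod m (y a)) + (\<Sum>a\<in>P. ?X a)"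
    using P fin eq by (subst sum.union_disjoint) auto
  also have "\<dots> = (\<Sum>s\<in>R' <+> P. tprod m (case_sum y x s))"
    using fin P(3) by (simp add: sum.Plus comp_def)
  finally have sum_eq: "(\<Sum>a\<in>Q' \<union> P. ?X a) = (\<Sum>s\<in>R' <+> P. tprod m (case_sum y x s))" .
  have "\<forall>s\<in>R' <+> P. is_ptensor m (case_sum y x s)"
    using y x Q'(2) P(1) by auto
  then have "trank m (\<Sum>a\<in>Q' \<union> P. ?X a) \<le> card R' + card P"
    unfolding sum_eq using fin P(3) trank_le_card[of "R' <+> P"] by (simp add: card_Plus)
  moreover have "card (Q' \<union> P) = card Q' + card P"
    using P fin by (intro card_Un_disjoint) auto
  moreover have "Q' \<union> P \<subseteq> {1..n}"
    using Q'(1) P(1) by blast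
  ultimately show ?thesis
    unfolding rt_def[symmetric] using Q'(3-5) P(2) \<open>rt < n\<close>
    by (intro exI[of _ "Q' \<union> P"]) auto
qed

theorem corollary7p7:
  fixes n m r :: nat and x :: "nat \<Rightarrow> nat \<Rightarrow> 'b \<Rightarrow> 'a::field"
  assumes "n \<ge> 2" and "m \<ge> 2"
    and "\<forall>a\<in>{1..n}. is_ptensor m (x a)"
    and "r \<le> n"
    and "n + r \<le> (\<Sum>j\<in>{1..m}. vdim {x a j | a. a \<in> {1..n}} - 1) + 1"
  shows "(\<forall>rt (y :: nat \<Rightarrow> nat \<Rightarrow> 'b \<Rightarrow> 'a). rt \<le> r \<longrightarrow>
            (\<forall>a\<in>{1..rt}. is_ptensor m (y a)) \<longrightarrow>
            (\<Sum>a\<in>{1..n}. tprod m (x a)) = (\<Sum>a\<in>{1..rt}. tprod m (y a)) \<longrightarrow>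
            (\<exists>Q R. Q \<subseteq> {1..n} \<and> R \<subseteq> {1..rt} \<and>
               max 1 (card R) \<le> card Q \<and> card Q \<le> n - 1 \<and>
               (\<Sum>a\<in>Q. tprod m (x a)) = (\<Sum>a\<in>R. tprod m (y a))))
       \<and> (1 \<le> trank m (\<Sum>a\<in>{1..n}. tprod m (x a)) \<and>
          trank m (\<Sum>a\<in>{1..n}. tprod m (x a)) \<le> min r (n - 1) \<longrightarrow>
          (\<exists>S. S \<subseteq> {1..n} \<and> trank m (\<Sum>a\<in>{1..n}. tprod m (x a)) \<le> card S \<and>
               card S \<le> n - 1 \<and>
               trank m (\<Sum>a\<in>S. tprod m (x a)) < trank m (\<Sum>a\<in>{1..n}. tprod m (x a))))"
proof -
  have "1 \<le> n" "1 \<le> m"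
    using assms(1,2) by simp_all
  then show ?thesis
    using exists_proper_sum_match[OF _ _ assms(3-5)] exists_subsum_of_lower_rank[OF _ _ assms(3-5)]
    by blast
qed

end
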